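(* Assume Assumption 1. Given a parametrized class $\mathcal G=\{g_\theta:\theta\in\Theta\}$, the model of data-generating distributions of $(X,T,Y)$ for which the class is correctly specified for the surrogate loss, i.e. for which $$\mathcal G\cap\Big(\operatorname*{argmin}_{g\ \text{unconstrained}}\mathbb E\big[|\psi|\, l(g(X),\operatorname{sign}(\psi))\big]\Big)\neq\varnothing$$ (argmin over all measurable $g:\mathcal X\to\mathbb R$), is given by all distributions on $(X,T,Y)$ for which there exists $\theta^*\in\Theta$ satisfying $$\frac{P(\psi>0\mid X)}{\mathbb E[|\psi|\mid X]}=\sigma(g_{\theta^*}(X))\quad\text{almost surely}.$$
   Context: $X$ is a context taking values in a space $\mathcal X$, $T\in\{-1,1\}$ is a treatment, $Y\in\mathbb R$ is an outcome, and $Y(-1),Y(1)$ are potential outcomes with $Y=Y(T)$ and $Y(t)\perp T\mid X$ for each $t$. A score variable $\psi$ is a real-valued random variable depending on observables. Assumption 1: $\mathbb E[\psi\mid X]=\mathbb E[Y(1)-Y(-1)\mid X]$ almost surely and $\mathbb E[|\psi|]<\infty$. $\Theta\subseteq\mathbb R^d$ and each $g_\theta:\mathcal X\to\mathbb R$ is measurable. The logistic surrogate loss is $l(g,s)=2\log(1+\exp(g))-(s+1)g$ for $g\in\mathbb R$, $s\in\{-1,1\}$, and $\sigma(g)=\exp(g)/(1+\exp(g))$. *)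

theory Defs
  imports "HOL-Probability.Probability"
begin

definition sigmoid :: "real \<Rightarrow> real" where
  "sigmoid g = exp g / (1 + exp g)"

definition logistic_loss :: "real \<Rightarrow> real \<Rightarrow> real" where
  "logistic_loss g s = 2 * ln (1 + exp g) - (s + 1) * g"

definition sigma_X :: "'a measure \<Rightarrow> 'x measure \<Rightarrow> ('a \<Rightarrow> 'x) \<Rightarrow> 'a measure" where
  "sigma_X M MX X = vimage_algebra (space M) X MX"

definition cond_exp_X :: "'a measure \<Rightarrow> 'x measure \<Rightarrow> ('a \<Rightarrow> 'x) \<Rightarrow> ('a \<Rightarrow> real) \<Rightarrow> ('a \<Rightarrow> real)" where
  "cond_exp_X M MX X f = real_cond_exp M (sigma_X M MX X) f"

definition cond_indep_X :: "'a measure \<Rightarrow> 'x measure \<Rightarrow> ('a \<Rightarrow> 'x) \<Rightarrow> ('a \<Rightarrow> real) \<Rightarrow> ('a \<Rightarrow> real) \<Rightarrow> bool" where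
  "cond_indep_X M MX X U V \<longleftrightarrow>
     (\<forall>A \<in> sets borel. \<forall>B \<in> sets borel.
        AE \<omega> in M. cond_exp_X M MX X (\<lambda>w. indicator A (U w) * indicator B (V w)) \<omega>
                    = cond_exp_X M MX X (\<lambda>w. indicator A (U w)) \<omega> *
                      cond_exp_X M MX X (\<lambda>w. indicator B (V w)) \<omega>)"

text \<open>Population surrogate risk E[ |psi| l(g(X), sign psi) ] (a nonnegative integrand,
  so taken as a nonnegative integral with values in [0, infinity]).\<close>
definition surrogate_risk :: "'a measure \<Rightarrow> ('a \<Rightarrow> 'x) \<Rightarrow> ('a \<Rightarrow> real) \<Rightarrow> ('x \<Rightarrow> real) \<Rightarrow> ennreal" where
  "surrogate_risk M X \<psi> g = (\<integral>\<^sup>+ \<omega>. ennreal (\<bar>\<psi> \<omega>\<bar> * logistic_loss (g (X \<omega>)) (sgn (\<psi> \<omega>))) \<partial>M)"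

definition surrogate_argmin :: "'a measure \<Rightarrow> 'x measure \<Rightarrow> ('a \<Rightarrow> 'x) \<Rightarrow> ('a \<Rightarrow> real) \<Rightarrow> ('x \<Rightarrow> real) set" where
  "surrogate_argmin M MX X \<psi> =
     {g \<in> borel_measurable MX. \<forall>g' \<in> borel_measurable MX.
        surrogate_risk M X \<psi> g \<le> surrogate_risk M X \<psi> g'}"

end

theory Submission
  imports Defs
begin

text \<open>
  Conditioning on \<open>X\<close>, the surrogate risk of \<open>g\<close> is \<open>E[\<phi>(a, b, g(X))]\<close> with
  \<open>a = E[\<psi>\<^sup>+ | X]\<close>, \<open>b = E[\<psi>\<^sup>- | X]\<close> and \<open>\<phi>(a, b, t) = a l(t, 1) + b l(t, -1)\<close>.
  The derivative \<open>2((a + b) \<sigma>(t) - a)\<close> of \<open>\<phi>(a, b, -)\<close> is nondecreasing, so \<open>t\<close> minimises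
  \<open>\<phi>(a, b, -)\<close> iff \<open>(a + b) \<sigma>(t) = a\<close>, i.e. iff \<open>\<sigma>(t) = E[\<psi>\<^sup>+ | X] / E[|\<psi>| | X]\<close>.
  A measurable \<open>g\<close> minimises the risk iff \<open>g(X)\<close> minimises \<open>\<phi>\<close> almost surely: if \<open>g\<close> could
  be beaten by a constant \<open>q\<close> on a non-null set, which is \<open>X\<close>-measurable, then changing \<open>g\<close> to
  \<open>q\<close> there would lower the risk; countably many rational \<open>q\<close> and continuity of \<open>\<phi>\<close> do the rest.
\<close>

definition weighted_logistic_loss :: "real \<Rightarrow> real \<Rightarrow> real \<Rightarrow> real" where
  "weighted_logistic_loss a b t = a * logistic_loss t 1 + b * logistic_loss t (-1)"

lemma sigmoid_mono: "x \<le> y \<Longrightarrow> sigmoid x \<le> sigmoid y"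
  unfolding sigmoid_def by (simp add: divide_simps add_pos_pos algebra_simps)

lemma logistic_loss_nonneg: "0 \<le> logistic_loss t 1" "0 \<le> logistic_loss t (-1)"
proof -
  have "t \<le> ln (1 + exp t)" and "0 \<le> ln (1 + exp t)"
    using ln_le_cancel_iff[of "exp t" "1 + exp t"] by (simp_all add: add_pos_pos)
  then show "0 \<le> logistic_loss t 1" "0 \<le> logistic_loss t (-1)"
    unfolding logistic_loss_def by simp_all
qed

lemma weighted_logistic_loss_nonneg:
  "0 \<le> a \<Longrightarrow> 0 \<le> b \<Longrightarrow> 0 \<le> weighted_logistic_loss a b t"
  unfolding weighted_logistic_loss_def using logistic_loss_nonneg by simp

lemma weighted_logistic_loss_has_real_derivative:
  "(weighted_logistic_loss a b has_real_derivative 2 * ((a + b) * sigmoid t - a)) (at t)"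
proof -
  have pos: "0 < 1 + exp t" by (simp add: add_pos_pos)
  have "((\<lambda>t. (a + b) * (2 * ln (1 + exp t)) - 2 * a * t) has_real_derivative
      (a + b) * (2 * (exp t / (1 + exp t))) - 2 * a) (at t)"
    using pos by (auto intro!: derivative_eq_intros)
  moreover have "(\<lambda>t. (a + b) * (2 * ln (1 + exp t)) - 2 * a * t) = weighted_logistic_loss a b"
    by (auto simp: fun_eq_iff weighted_logistic_loss_def logistic_loss_def algebra_simps)
  ultimately show ?thesis
    unfolding sigmoid_def by (simp add: algebra_simps)
qed

lemma continuous_on_weighted_logistic_loss: "continuous_on S (weighted_logistic_loss a b)"
  using weighted_logistic_loss_has_real_derivative
  by (intro continuous_at_imp_continuous_on ballI DERIV_isCont) blast

lemma weighted_logistic_loss_minimal_iff: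
  assumes "0 \<le> a" "0 \<le> b"
  shows "(\<forall>u. weighted_logistic_loss a b t \<le> weighted_logistic_loss a b u) \<longleftrightarrow>
         (a + b) * sigmoid t = a"
proof
  assume "\<forall>u. weighted_logistic_loss a b t \<le> weighted_logistic_loss a b u"
  then have "2 * ((a + b) * sigmoid t - a) = 0"
    by (intro DERIV_local_min[OF weighted_logistic_loss_has_real_derivative, of 1]) auto
  then show "(a + b) * sigmoid t = a" by simp
next
  assume calibrated: "(a + b) * sigmoid t = a"
  show "\<forall>u. weighted_logistic_loss a b t \<le> weighted_logistic_loss a b u"
  proof
    fix u
    show "weighted_logistic_loss a b t \<le> weighted_logistic_loss a b u"
    proof (cases "t \<le> u")
      case True
      show ?thesis
      proof (rule DERIV_nonneg_imp_nondecreasing[OF True])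
        fix x assume "t \<le> x"
        then have "a \<le> (a + b) * sigmoid x"
          using calibrated sigmoid_mono[of t x] assms by (metis add_nonneg_nonneg mult_left_mono)
        then show "\<exists>y. DERIV (weighted_logistic_loss a b) x :> y \<and> 0 \<le> y"
          using weighted_logistic_loss_has_real_derivative by fastforce
      qed
    next
      case False
      show ?thesis
      proof (rule DERIV_nonpos_imp_nonincreasing[of u t])
        fix x assume "x \<le> t"
        then have "(a + b) * sigmoid x \<le> a"
          using calibrated sigmoid_mono[of x t] assms by (metis add_nonneg_nonneg mult_left_mono)
        then show "\<exists>y. DERIV (weighted_logistic_loss a b) x :> y \<and> y \<le> 0"
          using weighted_logistic_loss_has_real_derivative by fastforce
      qed (use False in auto)
    qed
  qed
qed

lemma measurable_sigma_X: "X \<in> measurable M MX \<Longrightarrow> X \<in> measurable (sigma_X M MX X) MX"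
  unfolding sigma_X_def by (intro measurable_vimage_algebra1) (auto dest: measurable_space)

lemma sets_sigma_X:
  "X \<in> measurable M MX \<Longrightarrow> sets (sigma_X M MX X) = {X -` A \<inter> space M | A. A \<in> sets MX}"
  unfolding sigma_X_def by (intro sets_vimage_algebra2) (auto dest: measurable_space)

lemma sigma_finite_subalgebra_sigma_X:
  assumes "prob_space M" "X \<in> measurable M MX"
  shows "sigma_finite_subalgebra M (sigma_X M MX X)"
proof -
  interpret prob_space M by fact
  have "subalgebra M (sigma_X M MX X)"
    unfolding subalgebra_def sigma_X_def using sets_image_in_sets[OF refl assms(2)] by simp
  then have "finite_measure_subalgebra M (sigma_X M MX X)"
    by unfold_locales auto
  then show ?thesis by (rule finite_measure_subalgebra_is_sigma_finite)
qed

context sigma_finite_subalgebra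
begin

lemma ennreal_real_cond_exp_eq_nn_cond_exp:
  assumes f_int: "integrable M f" and f_nonneg: "\<And>x. 0 \<le> f x"
  shows "AE x in M. ennreal (real_cond_exp M F f x) = nn_cond_exp M F (\<lambda>x. ennreal (f x)) x"
proof -
  have [measurable]: "f \<in> borel_measurable M" using f_int by auto
  have "(\<lambda>x. ennreal (- f x)) = (\<lambda>x. 0)" using f_nonneg by (simp add: ennreal_neg fun_eq_iff)
  moreover have "AE x in M. 0 = nn_cond_exp M F (\<lambda>x. 0) x" by (rule nn_cond_exp_F_meas) auto
  ultimately have neg_part: "AE x in M. nn_cond_exp M F (\<lambda>x. ennreal (- f x)) x = 0" by auto
  have "(\<integral>\<^sup>+x. nn_cond_exp M F (\<lambda>x. ennreal (f x)) x \<partial>M) = (\<integral>\<^sup>+x. 1 * ennreal (f x) \<partial>M)"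
    using nn_cond_exp_intg[of "\<lambda>_. 1" "\<lambda>x. ennreal (f x)"] by simp
  also have "\<dots> \<noteq> \<infinity>" using integrableD(2)[OF f_int] f_nonneg by simp
  finally have "AE x in M. nn_cond_exp M F (\<lambda>x. ennreal (f x)) x \<noteq> \<infinity>"
    by (intro nn_integral_PInf_AE) auto
  with neg_part show ?thesis
    unfolding real_cond_exp_def by eventually_elim (auto simp: ennreal_enn2real_if)
qed

lemma nn_integral_mult_real_cond_exp:
  assumes f_int: "integrable M f" and f_nonneg: "\<And>x. 0 \<le> f x"
    and h_meas: "h \<in> borel_measurable F" and h_nonneg: "\<And>x. 0 \<le> h x"
  shows "(\<integral>\<^sup>+x. ennreal (f x * h x) \<partial>M) = (\<integral>\<^sup>+x. ennreal (real_cond_exp M F f x * h x) \<partial>M)"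
proof -
  have [measurable]: "f \<in> borel_measurable M" using f_int by auto
  have [measurable]: "(\<lambda>x. ennreal (h x)) \<in> borel_measurable F" using h_meas by measurable
  have "(\<integral>\<^sup>+x. ennreal (f x * h x) \<partial>M) = (\<integral>\<^sup>+x. ennreal (h x) * ennreal (f x) \<partial>M)"
    using f_nonneg h_nonneg by (simp add: ennreal_mult mult.commute)
  also have "\<dots> = (\<integral>\<^sup>+x. ennreal (h x) * nn_cond_exp M F (\<lambda>x. ennreal (f x)) x \<partial>M)"
    by (rule nn_cond_exp_intg[symmetric]) auto
  also have "\<dots> = (\<integral>\<^sup>+x. ennreal (real_cond_exp M F f x * h x) \<partial>M)"
  proof (rule nn_integral_cong_AE)
    have "AE x in M. 0 \<le> real_cond_exp M F f x" by (rule real_cond_exp_pos) (auto simp: f_nonneg)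
    with ennreal_real_cond_exp_eq_nn_cond_exp[OF f_int f_nonneg]
    show "AE x in M. ennreal (h x) * nn_cond_exp M F (\<lambda>x. ennreal (f x)) x
        = ennreal (real_cond_exp M F f x * h x)"
      by eventually_elim (simp add: ennreal_mult h_nonneg mult.commute)
  qed
  finally show ?thesis .
qed

end

context
  fixes M :: "'a measure" and MX :: "'x measure" and X :: "'a \<Rightarrow> 'x" and \<psi> :: "'a \<Rightarrow> real"
  assumes prob: "prob_space M"
    and X_meas [measurable]: "X \<in> measurable M MX"
    and \<psi>_int: "integrable M \<psi>"
begin

interpretation sigma_finite_subalgebra M "sigma_X M MX X"
  by (rule sigma_finite_subalgebra_sigma_X[OF prob X_meas])

declare measurable_sigma_X[OF X_meas, measurable]

abbreviation "cond_exp_pos_part \<equiv> cond_exp_X M MX X (\<lambda>w. max (\<psi> w) 0)"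
abbreviation "cond_exp_neg_part \<equiv> cond_exp_X M MX X (\<lambda>w. max (- \<psi> w) 0)"
abbreviation "cond_surrogate_loss t w \<equiv>
  weighted_logistic_loss (cond_exp_pos_part w) (cond_exp_neg_part w) t"

lemma cond_exp_pos_neg_part_nonneg:
  "AE w in M. 0 \<le> cond_exp_pos_part w \<and> 0 \<le> cond_exp_neg_part w"
proof -
  have "AE w in M. 0 \<le> cond_exp_pos_part w" "AE w in M. 0 \<le> cond_exp_neg_part w"
    unfolding cond_exp_X_def using \<psi>_int by (auto intro!: real_cond_exp_pos)
  then show ?thesis by eventually_elim simp
qed

lemma cond_exp_abs_eq:
  "AE w in M. cond_exp_X M MX X (\<lambda>w. \<bar>\<psi> w\<bar>) w = cond_exp_pos_part w + cond_exp_neg_part w"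
proof -
  have "(\<lambda>w. \<bar>\<psi> w\<bar>) = (\<lambda>w. max (\<psi> w) 0 + max (- \<psi> w) 0)" by (auto simp: fun_eq_iff)
  then show ?thesis
    unfolding cond_exp_X_def using \<psi>_int by (auto intro!: real_cond_exp_add)
qed

lemma surrogate_risk_eq_cond_surrogate_loss:
  assumes [measurable]: "H \<in> borel_measurable MX"
  shows "surrogate_risk M X \<psi> H =
    (\<integral>\<^sup>+w. ennreal (cond_surrogate_loss (H (X w)) w) \<partial>M)"
proof -
  have [measurable]: "\<psi> \<in> borel_measurable M" using \<psi>_int by auto
  have loss_meas: "(\<lambda>w. logistic_loss (H (X w)) s) \<in> borel_measurable (sigma_X M MX X)" for s
    unfolding logistic_loss_def by measurable
  have split: "\<bar>p\<bar> * logistic_loss t (sgn p)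
      = max p 0 * logistic_loss t 1 + max (- p) 0 * logistic_loss t (-1)" for p t :: real
    by (cases "p > 0"; cases "p < 0") auto
  have "surrogate_risk M X \<psi> H =
      (\<integral>\<^sup>+w. ennreal (max (\<psi> w) 0 * logistic_loss (H (X w)) 1)
        + ennreal (max (- \<psi> w) 0 * logistic_loss (H (X w)) (-1)) \<partial>M)"
    unfolding surrogate_risk_def split
    by (intro nn_integral_cong ennreal_plus) (simp_all add: logistic_loss_nonneg)
  also have "\<dots> = (\<integral>\<^sup>+w. ennreal (max (\<psi> w) 0 * logistic_loss (H (X w)) 1) \<partial>M)
      + (\<integral>\<^sup>+w. ennreal (max (- \<psi> w) 0 * logistic_loss (H (X w)) (-1)) \<partial>M)"
    by (rule nn_integral_add) (auto simp: logistic_loss_def)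
  also have "\<dots> = (\<integral>\<^sup>+w. ennreal (cond_exp_pos_part w * logistic_loss (H (X w)) 1) \<partial>M)
      + (\<integral>\<^sup>+w. ennreal (cond_exp_neg_part w * logistic_loss (H (X w)) (-1)) \<partial>M)"
    unfolding cond_exp_X_def using \<psi>_int loss_meas
    by (simp add: nn_integral_mult_real_cond_exp logistic_loss_nonneg)
  also have "\<dots> = (\<integral>\<^sup>+w. ennreal (cond_exp_pos_part w * logistic_loss (H (X w)) 1)
      + ennreal (cond_exp_neg_part w * logistic_loss (H (X w)) (-1)) \<partial>M)"
    unfolding cond_exp_X_def by (rule nn_integral_add[symmetric]) (auto simp: logistic_loss_def)
  also have "\<dots> = (\<integral>\<^sup>+w. ennreal (cond_surrogate_loss (H (X w)) w) \<partial>M)"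
    using cond_exp_pos_neg_part_nonneg
    by (intro nn_integral_cong_AE, eventually_elim)
      (simp add: weighted_logistic_loss_def ennreal_plus logistic_loss_nonneg)
  finally show ?thesis .
qed

lemma surrogate_risk_zero_finite: "surrogate_risk M X \<psi> (\<lambda>_. 0) < \<infinity>"
proof -
  have "surrogate_risk M X \<psi> (\<lambda>_. 0) = (\<integral>\<^sup>+w. ennreal (norm (2 * ln 2 * \<bar>\<psi> w\<bar>)) \<partial>M)"
    unfolding surrogate_risk_def by (rule nn_integral_cong) (simp add: logistic_loss_def abs_mult)
  also have "\<dots> < \<infinity>"
    using integrableD(2)[of M "\<lambda>w. 2 * ln 2 * \<bar>\<psi> w\<bar>"] \<psi>_int by (simp add: top.not_eq_extremum)
  finally show ?thesis .
qed

lemma surrogate_argmin_le_const: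
  assumes G: "G \<in> surrogate_argmin M MX X \<psi>"
  shows "AE w in M. cond_surrogate_loss (G (X w)) w \<le> cond_surrogate_loss q w"
proof (rule ccontr)
  assume not_le: "\<not> (AE w in M. cond_surrogate_loss (G (X w)) w \<le> cond_surrogate_loss q w)"
  have [measurable]: "G \<in> borel_measurable MX"
    and G_min: "\<And>H. H \<in> borel_measurable MX \<Longrightarrow> surrogate_risk M X \<psi> G \<le> surrogate_risk M X \<psi> H"
    using G unfolding surrogate_argmin_def by auto
  have loss_meas [measurable]:
    "(\<lambda>w. cond_surrogate_loss (H (X w)) w) \<in> borel_measurable (sigma_X M MX X)"
    if [measurable]: "H \<in> borel_measurable MX" for H
    unfolding cond_exp_X_def weighted_logistic_loss_def logistic_loss_def by measurable
  note measurable_from_subalg[OF subalg loss_meas, measurable]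
  have "{w \<in> space (sigma_X M MX X). cond_surrogate_loss q w < cond_surrogate_loss (G (X w)) w}
      \<in> sets (sigma_X M MX X)"
    by measurable
  then obtain U where [measurable]: "U \<in> sets MX"
    and U_eq: "{w \<in> space M. cond_surrogate_loss q w < cond_surrogate_loss (G (X w)) w}
      = X -` U \<inter> space M"
    unfolding sets_sigma_X[OF X_meas] by (auto simp: sigma_X_def)
  then have U: "X w \<in> U \<longleftrightarrow> cond_surrogate_loss q w < cond_surrogate_loss (G (X w)) w"
    if "w \<in> space M" for w
    using that by blast
  define H where "H x = (if x \<in> U then q else G x)" for x
  have [measurable]: "H \<in> borel_measurable MX" unfolding H_def by measurable
  let ?risk = "\<lambda>F. \<integral>\<^sup>+w. ennreal (cond_surrogate_loss (F (X w)) w) \<partial>M"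
  have H_le: "AE w in M. cond_surrogate_loss (H (X w)) w \<le> cond_surrogate_loss (G (X w)) w"
    using U by (intro AE_I2) (auto simp: H_def)
  have "\<not> (AE w in M. ennreal (cond_surrogate_loss (G (X w)) w)
                     \<le> ennreal (cond_surrogate_loss (H (X w)) w))"
  proof
    assume "AE w in M. ennreal (cond_surrogate_loss (G (X w)) w)
                     \<le> ennreal (cond_surrogate_loss (H (X w)) w)"
    with cond_exp_pos_neg_part_nonneg AE_space
    have "AE w in M. cond_surrogate_loss (G (X w)) w \<le> cond_surrogate_loss q w"
      by eventually_elim
        (auto simp: H_def U weighted_logistic_loss_nonneg ennreal_le_iff split: if_splits)
    with not_le show False by simp
  qed
  moreover have "?risk H \<le> ?risk G"
    using H_le by (intro nn_integral_mono_AE) (auto intro: ennreal_leI)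
  then have "?risk H \<noteq> \<infinity>"
    using G_min[of "\<lambda>_. 0"] surrogate_risk_zero_finite
    by (auto simp: surrogate_risk_eq_cond_surrogate_loss top_unique)
  ultimately have "?risk H < ?risk G"
    using H_le by (intro nn_integral_less) (auto intro: ennreal_leI)
  with G_min[of H] show False by (simp add: surrogate_risk_eq_cond_surrogate_loss)
qed

lemma surrogate_argmin_iff_pointwise_min:
  assumes [measurable]: "G \<in> borel_measurable MX"
  shows "G \<in> surrogate_argmin M MX X \<psi> \<longleftrightarrow>
    (AE w in M. \<forall>u. cond_surrogate_loss (G (X w)) w \<le> cond_surrogate_loss u w)"
proof
  assume G: "G \<in> surrogate_argmin M MX X \<psi>"
  have "AE w in M. \<forall>q \<in> \<rat>. cond_surrogate_loss (G (X w)) w \<le> cond_surrogate_loss q w"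
    using surrogate_argmin_le_const[OF G] by (intro AE_ball_countable' countable_rat)
  then show "AE w in M. \<forall>u. cond_surrogate_loss (G (X w)) w \<le> cond_surrogate_loss u w"
    by eventually_elim
      (auto intro: continuous_ge_on_closure[OF continuous_on_weighted_logistic_loss, of _ \<rat>]
            simp: Rats_closure_real)
next
  assume "AE w in M. \<forall>u. cond_surrogate_loss (G (X w)) w \<le> cond_surrogate_loss u w"
  then have "surrogate_risk M X \<psi> G \<le> surrogate_risk M X \<psi> H" if "H \<in> borel_measurable MX" for H
    unfolding surrogate_risk_eq_cond_surrogate_loss[OF assms] surrogate_risk_eq_cond_surrogate_loss[OF that]
    by (intro nn_integral_mono_AE) (auto intro: ennreal_leI)
  then show "G \<in> surrogate_argmin M MX X \<psi>"
    unfolding surrogate_argmin_def using assms by blast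
qed

lemma surrogate_argmin_iff_calibrated:
  assumes "G \<in> borel_measurable MX"
  shows "G \<in> surrogate_argmin M MX X \<psi> \<longleftrightarrow>
    (AE w in M. cond_exp_X M MX X (\<lambda>w. \<bar>\<psi> w\<bar>) w \<noteq> 0 \<longrightarrow>
       cond_exp_pos_part w / cond_exp_X M MX X (\<lambda>w. \<bar>\<psi> w\<bar>) w = sigmoid (G (X w)))"
proof -
  have "AE w in M. (\<forall>u. cond_surrogate_loss (G (X w)) w \<le> cond_surrogate_loss u w) \<longleftrightarrow>
    (cond_exp_X M MX X (\<lambda>w. \<bar>\<psi> w\<bar>) w \<noteq> 0 \<longrightarrow>
       cond_exp_pos_part w / cond_exp_X M MX X (\<lambda>w. \<bar>\<psi> w\<bar>) w = sigmoid (G (X w)))"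
    using cond_exp_pos_neg_part_nonneg cond_exp_abs_eq
    by eventually_elim (auto simp: weighted_logistic_loss_minimal_iff field_simps add_nonneg_eq_0_iff)
  then show ?thesis
    unfolding surrogate_argmin_iff_pointwise_min[OF assms] by (auto elim: AE_mp)
qed

end

theorem lemma1:
  fixes M :: "'a measure" and MX :: "'x measure"
    and X :: "'a \<Rightarrow> 'x" and T Y Y1 Ym \<psi> :: "'a \<Rightarrow> real"
    and h :: "'x \<Rightarrow> real \<Rightarrow> real \<Rightarrow> real"
    and \<Theta> :: "(real ^ 'd) set" and g :: "real ^ 'd \<Rightarrow> 'x \<Rightarrow> real"
  assumes prob: "prob_space M"
    and X_meas: "X \<in> measurable M MX"
    and T_meas: "T \<in> borel_measurable M"
    and T_vals: "\<forall>\<omega> \<in> space M. T \<omega> \<in> {-1, 1}"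
    and Y1_meas: "Y1 \<in> borel_measurable M"
    and Ym_meas: "Ym \<in> borel_measurable M"
    and consistency: "\<forall>\<omega> \<in> space M. Y \<omega> = (if T \<omega> = 1 then Y1 \<omega> else Ym \<omega>)"
    and unconf1: "cond_indep_X M MX X Y1 T"
    and unconfm: "cond_indep_X M MX X Ym T"
    and h_meas: "(\<lambda>(x, t, y). h x t y) \<in> borel_measurable (MX \<Otimes>\<^sub>M borel \<Otimes>\<^sub>M borel)"
    and psi_obs: "\<forall>\<omega> \<in> space M. \<psi> \<omega> = h (X \<omega>) (T \<omega>) (Y \<omega>)"
    and cate_int: "integrable M (\<lambda>\<omega>. Y1 \<omega> - Ym \<omega>)"
    and A1_cond: "AE \<omega> in M. cond_exp_X M MX X \<psi> \<omega> = cond_exp_X M MX X (\<lambda>w. Y1 w - Ym w) \<omega>"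
    and A1_int: "integrable M \<psi>"
    and g_meas: "\<forall>\<theta> \<in> \<Theta>. g \<theta> \<in> borel_measurable MX"
  shows "(\<exists>\<theta> \<in> \<Theta>. g \<theta> \<in> surrogate_argmin M MX X \<psi>) \<longleftrightarrow>
         (\<exists>\<theta> \<in> \<Theta>. AE \<omega> in M.
            cond_exp_X M MX X (\<lambda>w. \<bar>\<psi> w\<bar>) \<omega> \<noteq> 0 \<longrightarrow>
            cond_exp_X M MX X (\<lambda>w. max (\<psi> w) 0) \<omega> / cond_exp_X M MX X (\<lambda>w. \<bar>\<psi> w\<bar>) \<omega>
              = sigmoid (g \<theta> (X \<omega>)))"
  using surrogate_argmin_iff_calibrated[OF prob X_meas A1_int] g_meas by (intro bex_cong) auto

end
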